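(* Let $n\ge 1$, let $c\in\mathbb{R}^n$ with $c_1\ge c_2\ge\cdots\ge c_n\ge 0$, and let $u\in\mathbb{R}^n$ with $u_i>0$ for all $i$. Consider the problem \[ \text{(P)}\qquad \min\ f(x)=\tfrac12\Big(\sum_{i=1}^n x_i\Big)^2-\sum_{i=1}^n c_ix_i\quad\text{subject to } 0\le x\le u . \] For $k=0,\dots,n$ let $U_k=\sum_{i=1}^k u_i$ ($U_0=0$) and let $x^{(k)}$ be the vector with $x^{(k)}_i=u_i$ for $i\le k$ and $x^{(k)}_i=0$ for $i>k$. For $k=1,\dots,n$ let $G_k=U_{k-1}+\frac12u_k-c_k$. Let $e_i$ be the $i$-th standard unit vector. (i) If $\bar n$, the smallest index in $\{1,\dots,n\}$ with $G_{\bar n}\ge0$, exists and satisfies $1<\bar n\le n$, let $\delta_1=\min\{c_{\bar n-1}-U_{\bar n-2},u_{\bar n-1}\}$, $\delta_2=\max\{c_{\bar n}-U_{\bar n-1},0\}$, $\bar x=x^{(\bar n-2)}+\delta_1e_{\bar n-1}$, $\tilde x=x^{(\bar n-1)}+\delta_2e_{\bar n}$. Then $\min\{f(\bar x),f(\tilde x)\}$ is the optimal value of (P). (ii) If $G_1\ge 0$ (i.e. $\bar n=1$), let $\tilde x=\min\{c_1,u_1\}\,e_1$. Then $f(\tilde x)$ is the optimal value of (P). (iii) If $G_k<0$ for all $k=1,\dots,n$, let $\delta'=\min\{c_n-U_{n-1},u_n\}$ and $\tilde x=x^{(n-1)}+\delta'e_n$. Then $\tilde x$ is an optimal solution of (P),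 i.e. $f(\tilde x)$ is its optimal value.
   Context: Inequalities between vectors are componentwise. *)

theory Defs
  imports Complex_Main
begin

(* Vectors in R^n are represented as functions nat => real; only the
   components 1..n are relevant. *)

definition obj :: "nat \<Rightarrow> (nat \<Rightarrow> real) \<Rightarrow> (nat \<Rightarrow> real) \<Rightarrow> real" where
  "obj n c x = (1/2) * (\<Sum>i=1..n. x i)^2 - (\<Sum>i=1..n. c i * x i)"

definition feasible :: "nat \<Rightarrow> (nat \<Rightarrow> real) \<Rightarrow> (nat \<Rightarrow> real) \<Rightarrow> bool" where
  "feasible n u x \<longleftrightarrow> (\<forall>i\<in>{1..n}. 0 \<le> x i \<and> x i \<le> u i)"

definition optimal_value :: "nat \<Rightarrow> (nat \<Rightarrow> real) \<Rightarrow> (nat \<Rightarrow> real) \<Rightarrow> real \<Rightarrow> bool" where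
  "optimal_value n c u v \<longleftrightarrow>
     (\<exists>x. feasible n u x \<and> obj n c x = v) \<and> (\<forall>x. feasible n u x \<longrightarrow> v \<le> obj n c x)"

definition optimal_solution :: "nat \<Rightarrow> (nat \<Rightarrow> real) \<Rightarrow> (nat \<Rightarrow> real) \<Rightarrow> (nat \<Rightarrow> real) \<Rightarrow> bool" where
  "optimal_solution n c u x \<longleftrightarrow> feasible n u x \<and> (\<forall>y. feasible n u y \<longrightarrow> obj n c x \<le> obj n c y)"

definition Usum :: "(nat \<Rightarrow> real) \<Rightarrow> nat \<Rightarrow> real" where
  "Usum u k = (\<Sum>i=1..k. u i)"

definition xk :: "(nat \<Rightarrow> real) \<Rightarrow> nat \<Rightarrow> nat \<Rightarrow> real" where
  "xk u k = (\<lambda>i. if i \<le> k then u i else 0)"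

definition Gk :: "(nat \<Rightarrow> real) \<Rightarrow> (nat \<Rightarrow> real) \<Rightarrow> nat \<Rightarrow> real" where
  "Gk c u k = Usum u (k - 1) + (1/2) * u k - c k"

definition unitv :: "nat \<Rightarrow> nat \<Rightarrow> real" where
  "unitv i = (\<lambda>j. if j = i then 1 else 0)"

end

theory Submission
  imports Defs
begin

text \<open>The objective is convex with gradient \<open>S(x) - c\<^sub>i\<close>, where \<open>S(x) = \<Sum>\<^sub>i x\<^sub>i\<close>, so a feasible
  point is optimal as soon as it satisfies the first-order variational inequality over the box.
  Since \<open>c\<close> is decreasing, this inequality holds for the greedy point that fills the first \<open>k\<close>
  coordinates to capacity and sets coordinate \<open>k + 1\<close> to the projection of \<open>c\<^sub>k\<^sub>+\<^sub>1 - U\<^sub>k\<close> onto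
  \<open>[0, u\<^sub>k\<^sub>+\<^sub>1]\<close>, provided the resulting total lies between \<open>c\<^sub>k\<^sub>+\<^sub>2\<close> and \<open>c\<^sub>k\<close>.  In case (i) this
  holds for the first candidate if \<open>c\<^sub>n\<^sub>b\<^sub>-\<^sub>1 \<le> U\<^sub>n\<^sub>b\<^sub>-\<^sub>1\<close> and for the second one otherwise; the sign
  conditions on \<open>G\<close> only serve to identify the \<open>\<delta>\<close>'s of the statement with these projections.\<close>

lemma obj_diff_expansion:
  "obj n c y - obj n c x = (\<Sum>i=1..n. ((\<Sum>j=1..n. x j) - c i) * (y i - x i))
     + (1/2) * ((\<Sum>i=1..n. y i) - (\<Sum>i=1..n. x i))\<^sup>2"
proof -
  define S where "S = (\<Sum>j=1..n. x j)"
  define T where "T = (\<Sum>j=1..n. y j)"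
  have "(\<Sum>i=1..n. (S - c i) * (y i - x i))
      = (\<Sum>i=1..n. S * y i - S * x i - c i * y i + c i * x i)"
    by (rule sum.cong) (auto simp: algebra_simps)
  also have "\<dots> = S * T - S * S - (\<Sum>i=1..n. c i * y i) + (\<Sum>i=1..n. c i * x i)"
    by (simp add: sum.distrib sum_subtractf sum_distrib_left S_def T_def)
  finally show ?thesis
    unfolding obj_def S_def[symmetric] T_def[symmetric]
    by (simp add: power2_eq_square algebra_simps)
qed

lemma optimal_solutionI:
  assumes "feasible n u x"
    and "\<And>i t. i \<in> {1..n} \<Longrightarrow> 0 \<le> t \<Longrightarrow> t \<le> u i \<Longrightarrow>
           0 \<le> ((\<Sum>j=1..n. x j) - c i) * (t - x i)"
  shows "optimal_solution n c u x"
  unfolding optimal_solution_def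
proof (intro conjI allI impI)
  fix y assume y: "feasible n u y"
  have "0 \<le> (\<Sum>i=1..n. ((\<Sum>j=1..n. x j) - c i) * (y i - x i))"
    using assms(2) y unfolding feasible_def by (intro sum_nonneg) auto
  moreover have "0 \<le> (1/2::real) * ((\<Sum>i=1..n. y i) - (\<Sum>i=1..n. x i))\<^sup>2"
    by simp
  ultimately show "obj n c x \<le> obj n c y"
    using obj_diff_expansion[of n c y x] by linarith
qed (fact assms(1))

lemma optimal_value_obj: "optimal_solution n c u x \<Longrightarrow> optimal_value n c u (obj n c x)"
  unfolding optimal_solution_def optimal_value_def by auto

lemma optimal_value_min_obj:
  assumes "feasible n u x" "feasible n u y"
    and "optimal_solution n c u x \<or> optimal_solution n c u y"
  shows "optimal_value n c u (min (obj n c x) (obj n c y))"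
  using assms optimal_value_obj unfolding optimal_solution_def
  by (metis min.absorb1 min.absorb2)

lemma obj_cong: "(\<And>i. i \<in> {1..n} \<Longrightarrow> x i = y i) \<Longrightarrow> obj n c x = obj n c y"
  unfolding obj_def by simp

lemma optimal_solution_cong:
  assumes "\<And>i. i \<in> {1..n} \<Longrightarrow> x i = y i"
  shows "optimal_solution n c u x \<longleftrightarrow> optimal_solution n c u y"
  using assms obj_cong[of n x y c] unfolding optimal_solution_def feasible_def by simp

lemma Usum_Suc: "Usum u (Suc k) = Usum u k + u (Suc k)"
  by (simp add: Usum_def)

lemma max_min_projection_ineq:
  fixes a b d t :: real
  assumes "d = max 0 (min a b)" "0 \<le> t" "t \<le> b"
  shows "0 \<le> (d - a) * (t - d)"
  using assms by (auto simp: max_def min_def mult_nonpos_nonpos mult_nonpos_nonneg)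

definition greedy_point :: "(nat \<Rightarrow> real) \<Rightarrow> nat \<Rightarrow> real \<Rightarrow> nat \<Rightarrow> real" where
  "greedy_point u k d = (\<lambda>i. if i \<le> k then u i else if i = Suc k then d else 0)"

lemma xk_plus_unitv: "(\<lambda>i. xk u k i + d * unitv (Suc k) i) = greedy_point u k d"
  by (auto simp: xk_def unitv_def greedy_point_def)

lemma sum_greedy_point:
  assumes "k < n"
  shows "(\<Sum>i=1..n. greedy_point u k d i) = Usum u k + d"
proof -
  have "(\<Sum>i=1..n. greedy_point u k d i)
      = (\<Sum>i=1..n. (if i \<le> k then u i else 0) + (if i = Suc k then d else 0))"
    by (intro sum.cong) (auto simp: greedy_point_def)
  also have "\<dots> = (\<Sum>i=1..n. if i \<le> k then u i else 0) + d"
    using assms by (simp add: sum.distrib sum.delta)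
  also have "(\<Sum>i=1..n. if i \<le> k then u i else 0) = sum u ({1..n} \<inter> {i. i \<le> k})"
    by (simp add: sum.inter_restrict)
  also have "{1..n} \<inter> {i. i \<le> k} = {1..k}"
    using assms by auto
  finally show ?thesis by (simp add: Usum_def)
qed

lemma feasible_greedy_point:
  assumes "\<forall>i\<in>{1..n}. 0 \<le> u i" "0 \<le> d" "d \<le> u (Suc k)"
  shows "feasible n u (greedy_point u k d)"
  using assms unfolding feasible_def greedy_point_def by auto

lemma optimal_solution_greedy_point:
  assumes c_antimono: "\<forall>i j. 1 \<le> i \<and> i \<le> j \<and> j \<le> n \<longrightarrow> c j \<le> c i"
    and u_nonneg: "\<forall>i\<in>{1..n}. 0 \<le> u i"
    and k: "k < n"
    and d: "d = max 0 (min (c (Suc k) - Usum u k) (u (Suc k)))"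
    and lower: "1 \<le> k \<Longrightarrow> Usum u k + d \<le> c k"
    and upper: "Suc k < n \<Longrightarrow> c (Suc (Suc k)) \<le> Usum u k + d"
  shows "optimal_solution n c u (greedy_point u k d)"
proof (rule optimal_solutionI)
  have "0 \<le> u (Suc k)" using u_nonneg k by simp
  then show "feasible n u (greedy_point u k d)"
    using u_nonneg d by (intro feasible_greedy_point) auto
next
  fix i t assume i: "i \<in> {1..n}" and t: "0 \<le> t" "t \<le> u i"
  let ?S = "Usum u k + d"
  have "0 \<le> (?S - c i) * (t - greedy_point u k d i)"
  proof (cases rule: linorder_cases[of i "Suc k"])
    case less
    then have "c k \<le> c i" using c_antimono i k by auto
    then have "?S - c i \<le> 0" using lower less i by auto
    moreover have "t - greedy_point u k d i \<le> 0" using less t by (simp add: greedy_point_def)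
    ultimately show ?thesis by (simp add: mult_nonpos_nonpos)
  next
    case equal
    then show ?thesis
      using max_min_projection_ineq[OF d, of t] t by (simp add: greedy_point_def algebra_simps)
  next
    case greater
    then have "c i \<le> c (Suc (Suc k))" using c_antimono i by auto
    then have "0 \<le> ?S - c i" using upper greater i by auto
    moreover have "0 \<le> t - greedy_point u k d i" using greater t by (simp add: greedy_point_def)
    ultimately show ?thesis by simp
  qed
  then show "0 \<le> ((\<Sum>j=1..n. greedy_point u k d j) - c i) * (t - greedy_point u k d i)"
    using sum_greedy_point[OF k, of u d] by simp
qed

context
  fixes n :: nat and c u :: "nat \<Rightarrow> real"
  assumes c_antimono: "\<forall>i j. 1 \<le> i \<and> i \<le> j \<and> j \<le> n \<longrightarrow> c j \<le> c i"
    and u_nonneg: "\<forall>i\<in>{1..n}. 0 \<le> u i"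
begin

lemma optimal_value_two_candidates:
  assumes k: "Suc (Suc k) \<le> n"
    and G_neg: "Gk c u (Suc k) < 0" and G_nonneg: "0 \<le> Gk c u (Suc (Suc k))"
  defines "xbar \<equiv> greedy_point u k (min (c (Suc k) - Usum u k) (u (Suc k)))"
    and "xtil \<equiv> greedy_point u (Suc k) (max (c (Suc (Suc k)) - Usum u (Suc k)) 0)"
  shows "optimal_value n c u (min (obj n c xbar) (obj n c xtil))"
proof (rule optimal_value_min_obj)
  have u1: "0 \<le> u (Suc k)" and u2: "0 \<le> u (Suc (Suc k))" using u_nonneg k by auto
  have c_le: "\<And>i j. 1 \<le> i \<Longrightarrow> i \<le> j \<Longrightarrow> j \<le> n \<Longrightarrow> c j \<le> c i"
    using c_antimono by blast
  have G1: "Usum u k + u (Suc k) / 2 < c (Suc k)"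
    using G_neg by (simp add: Gk_def)
  have G2: "c (Suc (Suc k)) \<le> Usum u (Suc k) + u (Suc (Suc k)) / 2"
    using G_nonneg by (simp add: Gk_def)
  show "feasible n u xbar"
    unfolding xbar_def using G1 u1 u_nonneg by (intro feasible_greedy_point) auto
  show "feasible n u xtil"
    unfolding xtil_def using G2 u2 u_nonneg by (intro feasible_greedy_point) auto
  show "optimal_solution n c u xbar \<or> optimal_solution n c u xtil"
  proof (cases "c (Suc k) \<le> Usum u (Suc k)")
    case True
    then have "min (c (Suc k) - Usum u k) (u (Suc k))
        = max 0 (min (c (Suc k) - Usum u k) (u (Suc k)))"
      using G1 u1 by simp
    then have "optimal_solution n c u xbar"
      unfolding xbar_def using True G1 k c_le[of k "Suc k"] c_le[of "Suc k" "Suc (Suc k)"]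
      by (intro optimal_solution_greedy_point c_antimono u_nonneg) (auto simp: Usum_Suc)
    then show ?thesis ..
  next
    case False
    have "max (c (Suc (Suc k)) - Usum u (Suc k)) 0
        = max 0 (min (c (Suc (Suc k)) - Usum u (Suc k)) (u (Suc (Suc k))))"
      using G2 u2 by (simp add: Usum_Suc max_def)
    then have "optimal_solution n c u xtil"
      unfolding xtil_def using False k c_le[of "Suc k" "Suc (Suc k)"]
        c_le[of "Suc (Suc k)" "Suc (Suc (Suc k))"]
      by (intro optimal_solution_greedy_point c_antimono u_nonneg) auto
    then show ?thesis ..
  qed
qed

lemma optimal_solution_first_coordinate:
  assumes "1 \<le> n" "0 \<le> c 1" "0 \<le> Gk c u 1"
  shows "optimal_solution n c u (\<lambda>i. min (c 1) (u 1) * unitv 1 i)"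
proof -
  have c1: "c 1 \<le> u 1" using assms(2,3) by (simp add: Gk_def Usum_def)
  have "optimal_solution n c u (greedy_point u 0 (c 1))"
    using assms c1 c_antimono[rule_format, of 1 2]
    by (intro optimal_solution_greedy_point c_antimono u_nonneg) (auto simp: Usum_def numeral_2_eq_2)
  moreover have "optimal_solution n c u (\<lambda>i. min (c 1) (u 1) * unitv 1 i)
      \<longleftrightarrow> optimal_solution n c u (greedy_point u 0 (c 1))"
    using c1 by (intro optimal_solution_cong) (auto simp: unitv_def greedy_point_def)
  ultimately show ?thesis by simp
qed

lemma optimal_solution_last_coordinate:
  assumes "1 \<le> n" "Gk c u n < 0"
  shows "optimal_solution n c u (greedy_point u (n - 1) (min (c n - Usum u (n - 1)) (u n)))"
proof -
  obtain m where m: "n = Suc m" using assms(1) by (cases n) auto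
  have "Usum u m + u n / 2 < c n" "0 \<le> u n"
    using assms u_nonneg m by (auto simp: Gk_def)
  then show ?thesis
    using m c_antimono[rule_format, of m n]
    by (intro optimal_solution_greedy_point c_antimono u_nonneg) auto
qed

end

theorem theorem4:
  fixes n :: nat and c u :: "nat \<Rightarrow> real"
  assumes n: "n \<ge> 1"
    and c_mono: "\<forall>i j. 1 \<le> i \<and> i \<le> j \<and> j \<le> n \<longrightarrow> c j \<le> c i"
    and c_nonneg: "c n \<ge> 0"
    and u_pos: "\<forall>i\<in>{1..n}. u i > 0"
  shows
    "(\<forall>nb. 1 < nb \<and> nb \<le> n \<and> Gk c u nb \<ge> 0 \<and> (\<forall>k\<in>{1..<nb}. Gk c u k < 0) \<longrightarrow>
        (let \<delta>1 = min (c (nb - 1) - Usum u (nb - 2)) (u (nb - 1));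
             \<delta>2 = max (c nb - Usum u (nb - 1)) 0;
             xbar = (\<lambda>i. xk u (nb - 2) i + \<delta>1 * unitv (nb - 1) i);
             xtil = (\<lambda>i. xk u (nb - 1) i + \<delta>2 * unitv nb i)
         in optimal_value n c u (min (obj n c xbar) (obj n c xtil))))
     \<and> (Gk c u 1 \<ge> 0 \<longrightarrow>
        optimal_value n c u (obj n c (\<lambda>i. min (c 1) (u 1) * unitv 1 i)))
     \<and> ((\<forall>k\<in>{1..n}. Gk c u k < 0) \<longrightarrow>
        (let \<delta>' = min (c n - Usum u (n - 1)) (u n);
             xtil = (\<lambda>i. xk u (n - 1) i + \<delta>' * unitv n i)
         in optimal_solution n c u xtil \<and> optimal_value n c u (obj n c xtil)))"
proof -
  have u_nonneg: "\<forall>i\<in>{1..n}. 0 \<le> u i" using u_pos by (simp add: less_imp_le)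
  have c1: "0 \<le> c 1" using c_mono[rule_format, of 1 n] c_nonneg n by simp
  show ?thesis
  proof (intro conjI allI impI)
    fix nb assume nb: "1 < nb \<and> nb \<le> n \<and> Gk c u nb \<ge> 0 \<and> (\<forall>k\<in>{1..<nb}. Gk c u k < 0)"
    define k where "k = nb - 2"
    have k: "nb = Suc (Suc k)" using nb unfolding k_def by arith
    have "optimal_value n c u (min (obj n c (greedy_point u k (min (c (Suc k) - Usum u k) (u (Suc k)))))
      (obj n c (greedy_point u (Suc k) (max (c (Suc (Suc k)) - Usum u (Suc k)) 0))))"
      using nb k by (intro optimal_value_two_candidates[OF c_mono u_nonneg]) auto
    then show "let \<delta>1 = min (c (nb - 1) - Usum u (nb - 2)) (u (nb - 1));
               \<delta>2 = max (c nb - Usum u (nb - 1)) 0;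
               xbar = (\<lambda>i. xk u (nb - 2) i + \<delta>1 * unitv (nb - 1) i);
               xtil = (\<lambda>i. xk u (nb - 1) i + \<delta>2 * unitv nb i)
           in optimal_value n c u (min (obj n c xbar) (obj n c xtil))"
      unfolding k Let_def by (simp add: xk_plus_unitv)
  next
    assume "Gk c u 1 \<ge> 0"
    then show "optimal_value n c u (obj n c (\<lambda>i. min (c 1) (u 1) * unitv 1 i))"
      using optimal_solution_first_coordinate[OF c_mono u_nonneg n c1] optimal_value_obj by blast
  next
    assume "\<forall>k\<in>{1..n}. Gk c u k < 0"
    then have "optimal_solution n c u (greedy_point u (n - 1) (min (c n - Usum u (n - 1)) (u n)))"
      using n by (intro optimal_solution_last_coordinate[OF c_mono u_nonneg n]) simp
    then show "let \<delta>' = min (c n - Usum u (n - 1)) (u n);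
               xtil = (\<lambda>i. xk u (n - 1) i + \<delta>' * unitv n i)
           in optimal_solution n c u xtil \<and> optimal_value n c u (obj n c xtil)"
      using n by (cases n) (simp_all add: Let_def xk_plus_unitv optimal_value_obj)
  qed
qed

end
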